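(* Let $\Gamma$ be a finite directed graph. The map $\pi\circ\zeta:Y(U(1),\Gamma)\to H^1(\Gamma;\mathbb{R})$ takes values in $\mathcal{Z}_-(\Gamma)$, and $\pi\circ\zeta:Y(U(1),\Gamma)\to\mathcal{Z}_-(\Gamma)$ is a homotopy equivalence: it induces a bijection $\pi_0(Y(U(1),\Gamma))\to\mathcal{Z}_-(\Gamma)$, and each connected component of $Y(U(1),\Gamma)$ is contractible.
   Context: $\Gamma=(V,A,h,t)$ is a finite directed graph. An oriented cycle is a set $\{(a_1,\epsilon_1),\ldots,(a_k,\epsilon_k)\}\subset A\times\{\pm1\}$ such that, writing $h(-a)=t(a)$ and $t(-a)=h(a)$, we have $h(\epsilon_ia_i)=t(\epsilon_{i+1}a_{i+1})$ for $i<k$ and $h(\epsilon_ka_k)=t(\epsilon_1a_1)$, the vertices $h(\epsilon_ia_i)$ are distinct, and $a_1\ne a_2$ if $k=2$. For a group $G$, $Y(G,\Gamma)$ is the space of maps $\lambda:A\to G\setminus\{\mathrm{id}\}$ such that $\lambda(a_1)^{\epsilon_1}\cdots\lambda(a_k)^{\epsilon_k}=\mathrm{id}$ for every oriented cycle. Let $C^1(\Gamma;\mathbb{R})=\mathbb{R}^A$ be the cellular 1-cochains and $\pi:C^1(\Gamma;\mathbb{R})\to H^1(\Gamma;\mathbb{R})$ the natural surjection (dual to the inclusion $H_1(\Gamma;\mathbb{R})\hookrightarrow C_1(\Gamma;\mathbb{R})$). Let $\arg:U(1)\setminus\{1\}\to(0,1)$ be the normalized argument ($\arg(e^{2\pi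 i s})=s$ for $s\in(0,1)$), and $\zeta:Y(U(1),\Gamma)\to C^1(\Gamma;\mathbb{R})$, $\zeta(\lambda)(a)=\arg(\lambda(a))$. $\mathcal{Z}_-(\Gamma)$ is the set of points of the lattice $H^1(\Gamma;\mathbb{Z})$ lying in the interior of the zonotope $\pi([0,1]^A)\subset H^1(\Gamma;\mathbb{R})$ (equivalently, $\mathcal{Z}_-(\Gamma)=\pi((0,1)^A)\cap H^1(\Gamma;\mathbb{Z})$). *)

theory Defs
  imports "HOL-Analysis.Analysis"
begin

text \<open>A finite directed graph: vertices are a finite type 'v, arcs a finite type 'a,
  with head and tail maps hd_ tl_ :: 'a => 'v.  A signed arc is a pair (a, s) with
  s = True meaning +a and s = False meaning -a.\<close>

definition shead :: "('a \<Rightarrow> 'v) \<Rightarrow> ('a \<Rightarrow> 'v) \<Rightarrow> 'a \<times> bool \<Rightarrow> 'v" where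
  "shead h t x = (if snd x then h (fst x) else t (fst x))"

definition stail :: "('a \<Rightarrow> 'v) \<Rightarrow> ('a \<Rightarrow> 'v) \<Rightarrow> 'a \<times> bool \<Rightarrow> 'v" where
  "stail h t x = (if snd x then t (fst x) else h (fst x))"

definition oriented_cycle :: "('a \<Rightarrow> 'v) \<Rightarrow> ('a \<Rightarrow> 'v) \<Rightarrow> ('a \<times> bool) list \<Rightarrow> bool" where
  "oriented_cycle h t c \<longleftrightarrow>
     c \<noteq> [] \<and>
     (\<forall>i < length c. shead h t (c ! i) = stail h t (c ! ((i + 1) mod length c))) \<and>
     distinct (map (shead h t) c) \<and>
     (length c = 2 \<longrightarrow> fst (c ! 0) \<noteq> fst (c ! 1))"

definition spow :: "complex \<Rightarrow> bool \<Rightarrow> complex" where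
  "spow g s = (if s then g else inverse g)"

definition YU1 :: "('a::finite \<Rightarrow> 'v) \<Rightarrow> ('a \<Rightarrow> 'v) \<Rightarrow> (complex ^ 'a) set" where
  "YU1 h t = {l. (\<forall>a. cmod (l $ a) = 1 \<and> l $ a \<noteq> 1) \<and>
      (\<forall>c. oriented_cycle h t c \<longrightarrow> prod_list (map (\<lambda>x. spow (l $ fst x) (snd x)) c) = 1)}"

definition narg :: "complex \<Rightarrow> real" where
  "narg z = (THE s. s \<in> {0<..<1} \<and> z = exp (2 * pi * \<i> * complex_of_real s))"

definition zeta :: "complex ^ 'a \<Rightarrow> ('a \<Rightarrow> real)" where
  "zeta l = (\<lambda>a. narg (l $ a))"

definition H1_real :: "('a::finite \<Rightarrow> 'v) \<Rightarrow> ('a \<Rightarrow> 'v) \<Rightarrow> ('a \<Rightarrow> real) set" where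
  "H1_real h t = {z. \<forall>v. (\<Sum>a | h a = v. z a) - (\<Sum>a | t a = v. z a) = 0}"

definition H1_int :: "('a::finite \<Rightarrow> 'v) \<Rightarrow> ('a \<Rightarrow> 'v) \<Rightarrow> ('a \<Rightarrow> real) set" where
  "H1_int h t = {z \<in> H1_real h t. \<forall>a. z a \<in> \<int>}"

text \<open>H^1(Gamma;R) = Hom(H_1(Gamma;R),R); an element is represented by the linear functional
  on H_1 (extended by 0 off H_1).  pi : C^1 -> H^1 is restriction of a cochain to cycles.\<close>
definition picoh :: "('a::finite \<Rightarrow> 'v) \<Rightarrow> ('a \<Rightarrow> 'v) \<Rightarrow> ('a \<Rightarrow> real) \<Rightarrow> (('a \<Rightarrow> real) \<Rightarrow> real)" where
  "picoh h t c = (\<lambda>z. if z \<in> H1_real h t then (\<Sum>a\<in>UNIV. c a * z a) else 0)"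

definition H1coh_real :: "('a::finite \<Rightarrow> 'v) \<Rightarrow> ('a \<Rightarrow> 'v) \<Rightarrow> (('a \<Rightarrow> real) \<Rightarrow> real) set" where
  "H1coh_real h t = range (picoh h t)"

definition H1coh_int :: "('a::finite \<Rightarrow> 'v) \<Rightarrow> ('a \<Rightarrow> 'v) \<Rightarrow> (('a \<Rightarrow> real) \<Rightarrow> real) set" where
  "H1coh_int h t = {x \<in> H1coh_real h t. \<forall>z \<in> H1_int h t. x z \<in> \<int>}"

definition Zminus :: "('a::finite \<Rightarrow> 'v) \<Rightarrow> ('a \<Rightarrow> 'v) \<Rightarrow> (('a \<Rightarrow> real) \<Rightarrow> real) set" where
  "Zminus h t = picoh h t ` {c. \<forall>a. 0 < c a \<and> c a < 1} \<inter> H1coh_int h t"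

end

theory Submission
  imports Defs
begin

text \<open>Write \<open>\<lambda> = exp(2\<pi>i c)\<close> with \<open>c \<in> (0,1)\<^sup>A\<close>. The cycle conditions defining
  \<open>Y(U(1),\<Gamma>)\<close> say exactly that \<open>c\<close> has an integral sum around every oriented cycle. Since a
  closed walk decomposes into oriented cycles and backtracks, such a \<open>c\<close> differs by a
  coboundary from an integer cochain (correct it by its sums along walks from a root in
  each component), so \<open>\<pi>(c)\<close> is a lattice point; conversely an oriented cycle is an
  integral cycle. Hence \<open>exp\<close> identifies \<open>Y\<close> homeomorphically with the cochains in the open
  unit cube lying over lattice points, and each fibre of \<open>\<pi>\<close> there is convex. That integer
  cochain depends continuously on \<open>c\<close>, so \<open>\<pi>\<close> is locally constant on \<open>Y\<close>: the fibres are
  precisely the components, and they are contractible.\<close>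

section \<open>Walks and signed sums\<close>

lemma cyclic_successors_iff:
  assumes "xs \<noteq> []"
  shows "(\<forall>i < length xs. R (xs ! i) (xs ! ((i + 1) mod length xs)))
    \<longleftrightarrow> R (last xs) (hd xs) \<and> (\<forall>i. Suc i < length xs \<longrightarrow> R (xs ! i) (xs ! Suc i))"
proof -
  have succ: "(i + 1) mod length xs = (if Suc i < length xs then Suc i else 0)"
    if "i < length xs" for i
    using that by (metis Suc_eq_plus1 Suc_lessI mod_less mod_self)
  have ends: "last xs = xs ! (length xs - 1)" "hd xs = xs ! 0"
    using assms by (simp_all add: last_conv_nth hd_conv_nth)
  show ?thesis
  proof (intro iffI conjI allI impI)
    assume all: "\<forall>i < length xs. R (xs ! i) (xs ! ((i + 1) mod length xs))"
    show "R (last xs) (hd xs)"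
      using all[rule_format, of "length xs - 1"] succ[of "length xs - 1"] ends assms by simp
    show "R (xs ! i) (xs ! Suc i)" if "Suc i < length xs" for i
      using all[rule_format, of i] succ[of i] that by simp
  next
    fix i
    assume steps: "R (last xs) (hd xs) \<and> (\<forall>i. Suc i < length xs \<longrightarrow> R (xs ! i) (xs ! Suc i))"
      and i: "i < length xs"
    show "R (xs ! i) (xs ! ((i + 1) mod length xs))"
    proof (cases "Suc i < length xs")
      case False
      then have "i = length xs - 1"
        using i by simp
      then show ?thesis
        using succ[OF i] ends i steps by simp
    qed (use succ[OF i] steps in simp)
  qed
qed

fun walk :: "('a \<Rightarrow> 'v) \<Rightarrow> ('a \<Rightarrow> 'v) \<Rightarrow> 'v \<Rightarrow> ('a \<times> bool) list \<Rightarrow> 'v \<Rightarrow> bool" where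
  "walk h t u [] v \<longleftrightarrow> u = v"
| "walk h t u (x # w) v \<longleftrightarrow> stail h t x = u \<and> walk h t (shead h t x) w v"

lemma walk_append: "walk h t u (w1 @ w2) v \<longleftrightarrow> (\<exists>y. walk h t u w1 y \<and> walk h t y w2 v)"
  by (induction w1 arbitrary: u) auto

lemma walk_iff_nth:
  assumes "w \<noteq> []"
  shows "walk h t u w v \<longleftrightarrow> stail h t (hd w) = u \<and> shead h t (last w) = v
    \<and> (\<forall>i. Suc i < length w \<longrightarrow> shead h t (w ! i) = stail h t (w ! Suc i))"
  using assms
proof (induction w arbitrary: u)
  case (Cons x w)
  then show ?case
    by (cases w) (auto simp: less_Suc_eq_0_disj nth_Cons')
qed simp

lemma closed_walk_iff_cyclic:
  assumes "w \<noteq> []"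
  shows "walk h t u w u \<longleftrightarrow> stail h t (hd w) = u
    \<and> (\<forall>i < length w. shead h t (w ! i) = stail h t (w ! ((i + 1) mod length w)))"
  unfolding walk_iff_nth[OF assms]
    cyclic_successors_iff[OF assms, of "\<lambda>x y. shead h t x = stail h t y"]
  by blast

lemma oriented_cycle_closed_walk:
  "oriented_cycle h t w \<Longrightarrow> walk h t (stail h t (hd w)) w (stail h t (hd w))"
  using closed_walk_iff_cyclic[of w h t "stail h t (hd w)"] unfolding oriented_cycle_def by blast

definition reverse_walk :: "('a \<times> bool) list \<Rightarrow> ('a \<times> bool) list" where
  "reverse_walk w = rev (map (\<lambda>(a, s). (a, \<not> s)) w)"

lemma walk_reverse_walk: "walk h t u w v \<Longrightarrow> walk h t v (reverse_walk w) u"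
  by (induction w arbitrary: u) (auto simp: reverse_walk_def walk_append shead_def stail_def)

definition signed_value :: "('a \<Rightarrow> real) \<Rightarrow> 'a \<times> bool \<Rightarrow> real" where
  "signed_value c x = (if snd x then c (fst x) else - c (fst x))"

definition walk_sum :: "('a \<Rightarrow> real) \<Rightarrow> ('a \<times> bool) list \<Rightarrow> real" where
  "walk_sum c w = sum_list (map (signed_value c) w)"

lemma walk_sum_simps [simp]:
  "walk_sum c [] = 0"
  "walk_sum c (x # w) = signed_value c x + walk_sum c w"
  "walk_sum c (w1 @ w2) = walk_sum c w1 + walk_sum c w2"
  by (simp_all add: walk_sum_def)

lemma walk_sum_diff: "walk_sum (\<lambda>a. c a - d a) w = walk_sum c w - walk_sum d w"
  by (induction w) (auto simp: signed_value_def)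

lemma walk_sum_reverse_walk: "walk_sum c (reverse_walk w) = - walk_sum c w"
  by (induction w) (auto simp: reverse_walk_def signed_value_def)

lemma walk_sum_coboundary:
  "walk h t u w v \<Longrightarrow> walk_sum (\<lambda>a. p (h a) - p (t a)) w = p v - p u"
  by (induction w arbitrary: u) (auto simp: signed_value_def shead_def stail_def)

lemma walk_sum_backtrack:
  assumes "fst x = fst y" and "shead h t x \<noteq> shead h t y"
  shows "walk_sum c [x, y] = 0"
proof -
  have "snd x \<noteq> snd y"
  proof
    assume "snd x = snd y"
    with assms(1) have "x = y" by (simp add: prod_eq_iff)
    with assms(2) show False by simp
  qed
  then show ?thesis
    using assms(1) by (auto simp: signed_value_def)
qed

lemma closed_walk_split_at_repeat:
  assumes "walk h t u w u" and "\<not> distinct (map (shead h t) w)"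
  obtains y w1 w2 where "walk h t y w1 y" "walk h t y w2 y"
    "length w1 < length w" "length w2 < length w"
    "walk_sum c w = walk_sum c w1 + walk_sum c w2"
proof -
  obtain xs y ys zs where "map (shead h t) w = xs @ [y] @ ys @ [y] @ zs"
    using assms(2) not_distinct_decomp by blast
  then obtain w1 v1 where "w = w1 @ v1" "map (shead h t) v1 = y # ys @ y # zs"
    by (auto simp: map_eq_append_conv)
  then obtain x v where "w = w1 @ x # v" "shead h t x = y" "map (shead h t) v = ys @ y # zs"
    by (cases v1) auto
  moreover obtain w2 v2 where "v = w2 @ v2" "map (shead h t) v2 = y # zs"
    using calculation(3) by (auto simp: map_eq_append_conv)
  then obtain x' w3 where "v = w2 @ x' # w3" "shead h t x' = y"
    by (cases v2) auto
  ultimately have w: "w = w1 @ x # w2 @ x' # w3" and x: "shead h t x = y" and x': "shead h t x' = y"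
    by auto
  have "walk h t u (w1 @ [x]) y" "walk h t y (w2 @ [x']) y" "walk h t y w3 u"
    using assms(1) x x' unfolding w by (auto simp: walk_append)
  then have "walk h t y (w2 @ [x']) y" "walk h t y (w3 @ w1 @ [x]) y"
    by (auto simp: walk_append)
  moreover have "walk_sum c w = walk_sum c (w2 @ [x']) + walk_sum c (w3 @ w1 @ [x])"
    unfolding w by simp
  ultimately show ?thesis
    using that[of y "w2 @ [x']" "w3 @ w1 @ [x]"] unfolding w by simp
qed

section \<open>Cochains integral on cycles\<close>

definition integral_on_cycles :: "('a \<Rightarrow> 'v) \<Rightarrow> ('a \<Rightarrow> 'v) \<Rightarrow> ('a \<Rightarrow> real) \<Rightarrow> bool" where
  "integral_on_cycles h t c \<longleftrightarrow> (\<forall>w. oriented_cycle h t w \<longrightarrow> walk_sum c w \<in> \<int>)"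

text \<open>A closed walk without repeated vertices is an oriented cycle or a backtrack along one
  arc; otherwise it splits at a repeated vertex into two shorter closed walks.\<close>
lemma walk_sum_closed_walk_Ints:
  assumes c: "integral_on_cycles h t c" and "walk h t u w u"
  shows "walk_sum c w \<in> \<int>"
  using assms(2)
proof (induction "length w" arbitrary: u w rule: less_induct)
  case less
  show ?case
  proof (cases "distinct (map (shead h t) w)")
    case distinct: True
    show ?thesis
    proof (cases "w = [] \<or> length w = 2 \<and> fst (w ! 0) = fst (w ! 1)")
      case True
      then consider "w = []" | x y where "w = [x, y]" "fst x = fst y"
        by (auto simp: numeral_2_eq_2 length_Suc_conv)
      then show ?thesis
        by cases (use distinct walk_sum_backtrack[of _ _ h t c] in auto)
    next
      case False
      then have "oriented_cycle h t w"
        using distinct closed_walk_iff_cyclic[of w h t u] less.prems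
        unfolding oriented_cycle_def by blast
      then show ?thesis
        using c by (simp add: integral_on_cycles_def)
    qed
  next
    case False
    then obtain y w1 w2 where "walk h t y w1 y" "walk h t y w2 y"
      "length w1 < length w" "length w2 < length w"
      "walk_sum c w = walk_sum c w1 + walk_sum c w2"
      using closed_walk_split_at_repeat[OF less.prems] by blast
    then show ?thesis using less.hyps by auto
  qed
qed

definition joined :: "('a \<Rightarrow> 'v) \<Rightarrow> ('a \<Rightarrow> 'v) \<Rightarrow> 'v \<Rightarrow> 'v \<Rightarrow> bool" where
  "joined h t u v \<longleftrightarrow> (\<exists>w. walk h t u w v)"

lemma joined_refl: "joined h t v v"
  unfolding joined_def by (metis walk.simps(1))

lemma joined_sym: "joined h t u v \<Longrightarrow> joined h t v u"
  unfolding joined_def by (metis walk_reverse_walk)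

lemma joined_trans: "joined h t u v \<Longrightarrow> joined h t v x \<Longrightarrow> joined h t u x"
  unfolding joined_def by (metis walk_append)

definition component_root :: "('a \<Rightarrow> 'v) \<Rightarrow> ('a \<Rightarrow> 'v) \<Rightarrow> 'v \<Rightarrow> 'v" where
  "component_root h t v = (SOME u. joined h t u v)"

definition root_walk :: "('a \<Rightarrow> 'v) \<Rightarrow> ('a \<Rightarrow> 'v) \<Rightarrow> 'v \<Rightarrow> ('a \<times> bool) list" where
  "root_walk h t v = (SOME w. walk h t (component_root h t v) w v)"

lemma component_root_eq:
  assumes "joined h t v v'"
  shows "component_root h t v = component_root h t v'"
proof -
  have "joined h t u v \<longleftrightarrow> joined h t u v'" for u
    using assms joined_sym joined_trans by metis
  then have "(\<lambda>u. joined h t u v) = (\<lambda>u. joined h t u v')"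
    by blast
  then show ?thesis
    by (simp add: component_root_def)
qed

lemma walk_root_walk: "walk h t (component_root h t v) (root_walk h t v) v"
proof -
  have "joined h t (component_root h t v) v"
    unfolding component_root_def by (rule someI[of _ v]) (rule joined_refl)
  then show ?thesis
    unfolding root_walk_def joined_def by (rule someI_ex)
qed

text \<open>The correction is a coboundary, and the corrected value on an arc \<open>a\<close> is the sum of \<open>c\<close>
  around the closed walk from the root of the component to \<open>t a\<close>, along \<open>a\<close>, and back from
  \<open>h a\<close>; so it is an integer when \<open>c\<close> is integral on cycles.\<close>
definition integer_representative :: "('a \<Rightarrow> 'v) \<Rightarrow> ('a \<Rightarrow> 'v) \<Rightarrow> ('a \<Rightarrow> real) \<Rightarrow> 'a \<Rightarrow> real" where
  "integer_representative h t c a =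
     c a + walk_sum c (root_walk h t (t a)) - walk_sum c (root_walk h t (h a))"

lemma integer_representative_Ints:
  assumes "integral_on_cycles h t c"
  shows "integer_representative h t c a \<in> \<int>"
proof -
  have arc: "walk h t (t a) [(a, True)] (h a)"
    by (simp add: shead_def stail_def)
  then have "component_root h t (t a) = component_root h t (h a)"
    by (intro component_root_eq) (unfold joined_def, blast)
  then have "walk h t (component_root h t (t a))
      (root_walk h t (t a) @ [(a, True)] @ reverse_walk (root_walk h t (h a)))
      (component_root h t (t a))"
    using walk_root_walk[of h t "t a"] arc walk_reverse_walk[OF walk_root_walk[of h t "h a"]]
    by (auto simp: walk_append)
  from walk_sum_closed_walk_Ints[OF assms this] show ?thesis
    by (simp add: integer_representative_def walk_sum_reverse_walk signed_value_def algebra_simps)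
qed

lemma picoh_add_coboundary:
  fixes h t :: "'a::finite \<Rightarrow> 'v::finite"
  shows "picoh h t (\<lambda>a. c a + p (t a) - p (h a)) = picoh h t c"
proof
  fix z
  have "(\<Sum>a\<in>UNIV. p (t a) * z a) = (\<Sum>a\<in>UNIV. p (h a) * z a)" if "z \<in> H1_real h t"
  proof -
    have "(\<Sum>a\<in>UNIV. p (g a) * z a) = (\<Sum>v\<in>UNIV. p v * (\<Sum>a | g a = v. z a))"
      for g :: "'a \<Rightarrow> 'v"
      by (simp add: sum.group[of UNIV UNIV g "\<lambda>a. p (g a) * z a", symmetric] sum_distrib_left)
    moreover have "(\<Sum>a | h a = v. z a) = (\<Sum>a | t a = v. z a)" for v
      using that by (simp add: H1_real_def)
    ultimately show ?thesis by simp
  qed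
  then show "picoh h t (\<lambda>a. c a + p (t a) - p (h a)) z = picoh h t c z"
    by (simp add: picoh_def algebra_simps sum.distrib sum_subtractf)
qed

lemma picoh_integer_representative:
  fixes h t :: "'a::finite \<Rightarrow> 'v::finite"
  shows "picoh h t (integer_representative h t c) = picoh h t c"
  unfolding integer_representative_def by (rule picoh_add_coboundary)

definition walk_chain :: "('a \<times> bool) list \<Rightarrow> 'a \<Rightarrow> real" where
  "walk_chain w a = walk_sum (\<lambda>b. of_bool (b = a)) w"

lemma walk_sum_eq_sum_walk_chain:
  fixes c :: "'a::finite \<Rightarrow> real"
  shows "walk_sum c w = (\<Sum>a\<in>UNIV. c a * walk_chain w a)"
proof (induction w)
  case (Cons x w)
  have "(\<Sum>a\<in>UNIV. c a * signed_value (\<lambda>b. of_bool (b = a)) x) = signed_value c x"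
    by (cases "snd x") (simp_all add: signed_value_def sum_negf if_distrib[of "(*) _"] cong: if_cong)
  with Cons show ?case
    by (simp add: walk_chain_def distrib_left sum.distrib)
qed (simp add: walk_chain_def)

lemma walk_chain_in_H1_int:
  fixes h t :: "'a::finite \<Rightarrow> 'v"
  assumes "walk h t u w u"
  shows "walk_chain w \<in> H1_int h t"
proof -
  have "(\<Sum>a | g a = v. walk_chain w a) = walk_sum (\<lambda>a. of_bool (g a = v)) w"
    for g :: "'a \<Rightarrow> 'v" and v
    using sum.inter_filter[of UNIV "walk_chain w" "\<lambda>a. g a = v"]
    by (simp add: walk_sum_eq_sum_walk_chain of_bool_def if_distrib[of "\<lambda>x. x * _"] cong: if_cong)
  then have "(\<Sum>a | h a = v. walk_chain w a) - (\<Sum>a | t a = v. walk_chain w a) = 0" for v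
    using walk_sum_coboundary[OF assms, of "\<lambda>x. of_bool (x = v)"] by (simp add: walk_sum_diff)
  moreover have "walk_chain w a \<in> \<int>" for a
    unfolding walk_chain_def by (induction w) (auto simp: signed_value_def)
  ultimately show ?thesis
    by (simp add: H1_int_def H1_real_def)
qed

lemma picoh_in_H1coh_int_iff:
  fixes h t :: "'a::finite \<Rightarrow> 'v::finite"
  shows "picoh h t c \<in> H1coh_int h t \<longleftrightarrow> integral_on_cycles h t c"
proof
  assume c: "picoh h t c \<in> H1coh_int h t"
  show "integral_on_cycles h t c"
    unfolding integral_on_cycles_def
  proof (intro allI impI)
    fix w assume "oriented_cycle h t w"
    then have "walk_chain w \<in> H1_int h t"
      by (rule walk_chain_in_H1_int[OF oriented_cycle_closed_walk])
    then show "walk_sum c w \<in> \<int>"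
      using c by (simp add: H1coh_int_def H1_int_def picoh_def walk_sum_eq_sum_walk_chain)
  qed
next
  assume "integral_on_cycles h t c"
  have "picoh h t c z \<in> \<int>" if "z \<in> H1_int h t" for z
  proof -
    have "picoh h t c z = picoh h t (integer_representative h t c) z"
      by (simp only: picoh_integer_representative)
    also have "\<dots> = (\<Sum>a\<in>UNIV. integer_representative h t c a * z a)"
      using that by (simp add: picoh_def H1_int_def)
    also have "\<dots> \<in> \<int>"
      using that integer_representative_Ints[OF \<open>integral_on_cycles h t c\<close>]
      by (intro Ints_sum Ints_mult) (auto simp: H1_int_def)
    finally show ?thesis .
  qed
  then show "picoh h t c \<in> H1coh_int h t"
    by (simp add: H1coh_int_def H1coh_real_def)
qed

section \<open>Exponential coordinates on \<open>Y(U(1),\<Gamma>)\<close>\<close>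

definition exp2pi :: "real \<Rightarrow> complex" where
  "exp2pi s = exp (2 * pi * \<i> * complex_of_real s)"

lemma exp2pi_add: "exp2pi (s + s') = exp2pi s * exp2pi s'"
  by (simp add: exp2pi_def distrib_left exp_add)

lemma exp2pi_minus: "exp2pi (- s) = inverse (exp2pi s)"
  by (simp add: exp2pi_def exp_minus)

lemma norm_exp2pi: "cmod (exp2pi s) = 1"
  by (simp add: exp2pi_def)

lemma exp2pi_eq_1_iff: "exp2pi s = 1 \<longleftrightarrow> s \<in> \<int>"
proof -
  have "exp2pi s = 1 \<longleftrightarrow> (\<exists>n::int. s = of_int n)"
    by (simp add: exp2pi_def exp_eq_1)
  then show ?thesis
    by (auto elim: Ints_cases)
qed

lemma unit_circle_nonneg_Reals: "cmod z = 1 \<Longrightarrow> z \<in> \<real>\<^sub>\<ge>\<^sub>0 \<Longrightarrow> z = 1"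
  by (auto simp: complex_nonneg_Reals_iff complex_eq_iff cmod_def power2_eq_1_iff)

lemma Arg2pi_exp2pi: "0 \<le> s \<Longrightarrow> s < 1 \<Longrightarrow> Arg2pi (exp2pi s) = 2 * pi * s"
  by (simp add: exp2pi_def Arg2pi_exp)

lemma narg_exp2pi:
  assumes "0 < s" "s < 1"
  shows "narg (exp2pi s) = s"
  unfolding narg_def
proof (rule the_equality)
  fix s' assume "s' \<in> {0<..<1} \<and> exp2pi s = exp (2 * pi * \<i> * complex_of_real s')"
  then have "Arg2pi (exp2pi s) = 2 * pi * s'"
    using Arg2pi_exp2pi[of s'] by (simp add: exp2pi_def)
  with assms show "s' = s"
    using Arg2pi_exp2pi[of s] by simp
qed (use assms in \<open>simp add: exp2pi_def\<close>)

lemma narg_eq_Arg2pi: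
  assumes "cmod z = 1" "z \<noteq> 1"
  shows "narg z = Arg2pi z / (2 * pi)" "0 < narg z" "narg z < 1" "exp2pi (narg z) = z"
proof -
  have "Arg2pi z \<noteq> 0"
    using assms unit_circle_nonneg_Reals by (auto simp: Arg2pi_eq_0 complex_nonneg_Reals_iff complex_is_Real_iff)
  then have "0 < Arg2pi z / (2 * pi)" "Arg2pi z / (2 * pi) < 1"
    using Arg2pi_ge_0[of z] Arg2pi_lt_2pi[of z] by (auto simp: field_simps)
  moreover have "exp2pi (Arg2pi z / (2 * pi)) = z"
    using assms(1) complex_norm_eq_1_exp by (simp add: exp2pi_def mult.commute)
  ultimately show "narg z = Arg2pi z / (2 * pi)" "0 < narg z" "narg z < 1" "exp2pi (narg z) = z"
    using narg_exp2pi by metis+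
qed

lemma continuous_on_narg: "continuous_on {z. cmod z = 1 \<and> z \<noteq> 1} narg"
proof (rule continuous_on_eq)
  show "continuous_on {z. cmod z = 1 \<and> z \<noteq> 1} (\<lambda>z. Arg2pi z / (2 * pi))"
  proof (intro continuous_at_imp_continuous_on ballI continuous_intros)
    fix z assume "z \<in> {z. cmod z = 1 \<and> z \<noteq> 1}"
    then have "z \<notin> \<real>\<^sub>\<ge>\<^sub>0"
      using unit_circle_nonneg_Reals by blast
    then show "isCont Arg2pi z"
      by (rule continuous_at_Arg2pi)
  qed simp
qed (simp add: narg_eq_Arg2pi)

lemma prod_list_spow_exp2pi:
  "prod_list (map (\<lambda>x. spow (exp2pi (c (fst x))) (snd x)) w) = exp2pi (walk_sum c w)"
proof (induction w)
  case Nil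
  then show ?case by (simp add: exp2pi_def)
next
  case (Cons x w)
  then show ?case by (simp add: spow_def signed_value_def exp2pi_add exp2pi_minus)
qed

definition exp_vec :: "real ^ 'a \<Rightarrow> complex ^ 'a" where
  "exp_vec c = (\<chi> a. exp2pi (c $ a))"

definition narg_vec :: "complex ^ 'a \<Rightarrow> real ^ 'a" where
  "narg_vec l = (\<chi> a. narg (l $ a))"

lemma narg_vec_eq_zeta: "($) (narg_vec l) = zeta l"
  by (simp add: narg_vec_def zeta_def fun_eq_iff)

definition YU1_coords :: "('a::finite \<Rightarrow> 'v) \<Rightarrow> ('a \<Rightarrow> 'v) \<Rightarrow> (real ^ 'a) set" where
  "YU1_coords h t = {c \<in> box 0 1. integral_on_cycles h t (($) c)}"

lemma exp_vec_in_YU1_iff: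
  assumes "c \<in> box 0 1"
  shows "exp_vec c \<in> YU1 h t \<longleftrightarrow> integral_on_cycles h t (($) c)"
proof -
  have "exp2pi (c $ a) \<noteq> 1" for a
  proof -
    have "0 < c $ a" "c $ a < 1"
      using assms by (simp_all add: mem_box_cart)
    then show ?thesis
      by (auto simp: exp2pi_eq_1_iff elim!: Ints_cases)
  qed
  then show ?thesis
    by (simp add: YU1_def exp_vec_def norm_exp2pi prod_list_spow_exp2pi exp2pi_eq_1_iff
        integral_on_cycles_def)
qed

lemma homeomorphism_YU1_coords: "homeomorphism (YU1_coords h t) (YU1 h t) exp_vec narg_vec"
proof (rule homeomorphismI)
  show "continuous_on (YU1_coords h t) exp_vec"
    unfolding exp_vec_def exp2pi_def
    by (intro continuous_on_vec_lambda continuous_intros)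
  have circle: "cmod (l $ a) = 1" "l $ a \<noteq> 1" if "l \<in> YU1 h t" for l a
    using that by (auto simp: YU1_def)
  show "continuous_on (YU1 h t) narg_vec"
    unfolding narg_vec_def
    by (intro continuous_on_vec_lambda continuous_on_compose2[OF continuous_on_narg]
        continuous_intros) (auto simp: circle)
  have exp_narg: "exp_vec (narg_vec l) = l" if "l \<in> YU1 h t" for l
    using narg_eq_Arg2pi(4)[OF circle[OF that]]
    by (simp add: narg_vec_def exp_vec_def vec_eq_iff)
  show "narg_vec (exp_vec c) = c" if "c \<in> YU1_coords h t" for c
    using that by (simp add: YU1_coords_def narg_vec_def exp_vec_def vec_eq_iff mem_box_cart narg_exp2pi)
  show "exp_vec (narg_vec l) = l" if "l \<in> YU1 h t" for l
    using that exp_narg by blast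
  show "exp_vec ` YU1_coords h t \<subseteq> YU1 h t"
    using exp_vec_in_YU1_iff by (auto simp: YU1_coords_def)
  have "narg_vec l \<in> box 0 1" if "l \<in> YU1 h t" for l
    using narg_eq_Arg2pi(2,3)[OF circle[OF that]]
    by (simp add: narg_vec_def mem_box_cart)
  then show "narg_vec ` YU1 h t \<subseteq> YU1_coords h t"
    using exp_vec_in_YU1_iff exp_narg by (fastforce simp: YU1_coords_def)
qed

section \<open>Fibres and components\<close>

definition coords_fiber :: "('a::finite \<Rightarrow> 'v) \<Rightarrow> ('a \<Rightarrow> 'v) \<Rightarrow> (('a \<Rightarrow> real) \<Rightarrow> real) \<Rightarrow> (real ^ 'a) set" where
  "coords_fiber h t x = {c \<in> box 0 1. picoh h t (($) c) = x}"

lemma picoh_linear: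
  "picoh h t (\<lambda>a. u * c a + v * d a) = (\<lambda>z. u * picoh h t c z + v * picoh h t d z)"
  by (simp add: picoh_def fun_eq_iff sum.distrib sum_distrib_left algebra_simps)

lemma convex_coords_fiber: "convex (coords_fiber h t x)"
proof -
  have "convex {c :: real ^ 'a. picoh h t (($) c) = x}"
  proof (rule convexI)
    fix c d :: "real ^ 'a" and u v :: real
    assume "c \<in> {c. picoh h t (($) c) = x}" "d \<in> {c. picoh h t (($) c) = x}" "u + v = 1"
    moreover have "($) (u *\<^sub>R c + v *\<^sub>R d) = (\<lambda>a. u * c $ a + v * d $ a)"
      by (simp add: fun_eq_iff)
    ultimately show "u *\<^sub>R c + v *\<^sub>R d \<in> {c. picoh h t (($) c) = x}"
      using picoh_linear[of h t u "($) c" v "($) d"] by (simp add: distrib_right[symmetric])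
  qed
  moreover have "coords_fiber h t x = box 0 1 \<inter> {c. picoh h t (($) c) = x}"
    by (auto simp: coords_fiber_def)
  ultimately show ?thesis
    by (simp add: convex_Int)
qed

lemma Zminus_iff: "x \<in> Zminus h t \<longleftrightarrow> x \<in> H1coh_int h t \<and> coords_fiber h t x \<noteq> {}"
proof -
  have "x \<in> picoh h t ` {c. \<forall>a. 0 < c a \<and> c a < 1} \<longleftrightarrow> coords_fiber h t x \<noteq> {}"
  proof
    assume "x \<in> picoh h t ` {c. \<forall>a. 0 < c a \<and> c a < 1}"
    then obtain c where "\<forall>a. 0 < c a \<and> c a < 1" "x = picoh h t c"
      by blast
    moreover have "($) (vec_lambda c) = c"
      by (simp add: fun_eq_iff)
    ultimately have "vec_lambda c \<in> coords_fiber h t x"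
      by (simp add: coords_fiber_def mem_box_cart)
    then show "coords_fiber h t x \<noteq> {}"
      by blast
  qed (auto simp: coords_fiber_def mem_box_cart)
  then show ?thesis
    by (auto simp: Zminus_def)
qed

lemma coords_fiber_subset_YU1_coords:
  fixes h t :: "'a::finite \<Rightarrow> 'v::finite"
  shows "x \<in> H1coh_int h t \<Longrightarrow> coords_fiber h t x \<subseteq> YU1_coords h t"
  by (auto simp: coords_fiber_def YU1_coords_def picoh_in_H1coh_int_iff[symmetric])

lemma YU1_fiber_eq_image:
  fixes h t :: "'a::finite \<Rightarrow> 'v::finite"
  assumes "x \<in> H1coh_int h t"
  shows "{m \<in> YU1 h t. picoh h t (zeta m) = x} = exp_vec ` coords_fiber h t x"
proof (intro equalityI subsetI)
  note hom = homeomorphism_YU1_coords[of h t]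
  fix m assume m: "m \<in> {m \<in> YU1 h t. picoh h t (zeta m) = x}"
  then have "narg_vec m \<in> YU1_coords h t"
    using homeomorphism_image2[OF hom] by blast
  then have "narg_vec m \<in> coords_fiber h t x"
    using m by (simp add: coords_fiber_def YU1_coords_def narg_vec_eq_zeta)
  moreover have "exp_vec (narg_vec m) = m"
    using m homeomorphism_apply2[OF hom] by blast
  ultimately show "m \<in> exp_vec ` coords_fiber h t x"
    by (metis image_eqI)
next
  note hom = homeomorphism_YU1_coords[of h t]
  fix m assume "m \<in> exp_vec ` coords_fiber h t x"
  then obtain c where c: "c \<in> coords_fiber h t x" and m: "m = exp_vec c"
    by blast
  then have "c \<in> YU1_coords h t"
    using coords_fiber_subset_YU1_coords[OF assms] by blast
  then have "m \<in> YU1 h t" and "zeta m = ($) c"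
    using homeomorphism_image1[OF hom] homeomorphism_apply1[OF hom] narg_vec_eq_zeta[of m] m
    by auto
  then show "m \<in> {m \<in> YU1 h t. picoh h t (zeta m) = x}"
    using c by (simp add: coords_fiber_def)
qed

lemma continuous_on_integer_representative:
  fixes h t :: "'a::finite \<Rightarrow> 'v"
  shows "continuous_on S (\<lambda>c :: real ^ 'a. integer_representative h t (($) c) a)"
  unfolding integer_representative_def walk_sum_eq_sum_walk_chain
  by (intro continuous_intros)

lemma continuous_on_Ints_constant_on:
  fixes f :: "'a::topological_space \<Rightarrow> real"
  assumes "connected S" "continuous_on S f" "\<And>x. x \<in> S \<Longrightarrow> f x \<in> \<int>"
  shows "f constant_on S"
proof (rule continuous_discrete_range_constant[OF assms(1,2)])
  fix x assume "x \<in> S"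
  show "\<exists>e>0. \<forall>y. y \<in> S \<and> f y \<noteq> f x \<longrightarrow> e \<le> norm (f y - f x)"
  proof (intro exI[of _ 1] conjI allI impI)
    fix y assume "y \<in> S \<and> f y \<noteq> f x"
    then have "1 \<le> \<bar>f y - f x\<bar>"
      using assms(3) \<open>x \<in> S\<close> by (intro Ints_nonzero_abs_ge1) auto
    then show "1 \<le> norm (f y - f x)"
      by simp
  qed simp
qed

lemma constant_on_pointwise:
  assumes "\<And>a. (\<lambda>x. f x a) constant_on S"
  shows "f constant_on S"
proof -
  have "\<forall>a. \<exists>y. \<forall>x \<in> S. f x a = y"
    using assms by (simp add: constant_on_def)
  from choice[OF this] obtain y where "\<forall>a. \<forall>x \<in> S. f x a = y a"
    by blast
  then show ?thesis
    unfolding constant_on_def by (intro exI[of _ y]) (auto simp: fun_eq_iff)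
qed

lemma picoh_constant_on_connected:
  fixes h t :: "'a::finite \<Rightarrow> 'v::finite"
  assumes "connected S" and "S \<subseteq> YU1_coords h t"
  shows "(\<lambda>c. picoh h t (($) c)) constant_on S"
proof -
  have "(\<lambda>c. integer_representative h t (($) c)) constant_on S"
  proof (rule constant_on_pointwise)
    fix a
    show "(\<lambda>c. integer_representative h t (($) c) a) constant_on S"
      using assms
      by (intro continuous_on_Ints_constant_on continuous_on_integer_representative
          integer_representative_Ints) (auto simp: YU1_coords_def)
  qed
  then have "picoh h t \<circ> (\<lambda>c. integer_representative h t (($) c)) constant_on S"
    by (rule constant_on_compose)
  then show ?thesis
    by (simp add: o_def picoh_integer_representative)
qed

lemma picoh_zeta_in_H1coh_int:
  fixes h t :: "'a::finite \<Rightarrow> 'v::finite"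
  assumes "l \<in> YU1 h t"
  shows "picoh h t (zeta l) \<in> H1coh_int h t"
proof -
  have "narg_vec l \<in> YU1_coords h t"
    using assms homeomorphism_image2[OF homeomorphism_YU1_coords] by blast
  then show ?thesis
    by (simp add: YU1_coords_def picoh_in_H1coh_int_iff narg_vec_eq_zeta)
qed

lemma connected_component_YU1_eq_fiber:
  fixes h t :: "'a::finite \<Rightarrow> 'v::finite"
  assumes l: "l \<in> YU1 h t"
  shows "connected_component_set (YU1 h t) l = {m \<in> YU1 h t. picoh h t (zeta m) = picoh h t (zeta l)}"
    (is "?C = ?F")
proof
  note hom = homeomorphism_YU1_coords[of h t]
  have "connected (narg_vec ` ?C)"
    using homeomorphism_cont2[OF hom]
    by (intro connected_continuous_image continuous_on_subset[OF _ connected_component_subset]) auto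
  moreover have "narg_vec ` ?C \<subseteq> YU1_coords h t"
    using homeomorphism_image2[OF hom] connected_component_subset by blast
  ultimately have "(\<lambda>c. picoh h t (($) c)) constant_on narg_vec ` ?C"
    by (rule picoh_constant_on_connected)
  then have "picoh h t (zeta m) = picoh h t (zeta l)" if "m \<in> ?C" for m
    using that connected_component_refl[OF l] unfolding constant_on_def narg_vec_eq_zeta[symmetric]
    by auto
  then show "?C \<subseteq> ?F"
    using connected_component_subset by blast
  have "?F = exp_vec ` coords_fiber h t (picoh h t (zeta l))"
    using YU1_fiber_eq_image[OF picoh_zeta_in_H1coh_int[OF l]] .
  then have "connected ?F"
    using homeomorphism_cont1[OF hom] coords_fiber_subset_YU1_coords[OF picoh_zeta_in_H1coh_int[OF l]]
    by (metis connected_continuous_image continuous_on_subset convex_connected convex_coords_fiber)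
  then show "?F \<subseteq> ?C"
    using l by (intro connected_component_maximal) auto
qed

lemma contractible_connected_component_YU1:
  fixes h t :: "'a::finite \<Rightarrow> 'v::finite"
  assumes l: "l \<in> YU1 h t"
  shows "contractible (connected_component_set (YU1 h t) l)"
proof -
  let ?x = "picoh h t (zeta l)"
  have "homeomorphism (coords_fiber h t ?x) (exp_vec ` coords_fiber h t ?x) exp_vec narg_vec"
    using homeomorphism_YU1_coords coords_fiber_subset_YU1_coords[OF picoh_zeta_in_H1coh_int[OF l]]
    by (rule homeomorphism_of_subsets) auto
  then have "coords_fiber h t ?x homeomorphic connected_component_set (YU1 h t) l"
    unfolding connected_component_YU1_eq_fiber[OF l]
      YU1_fiber_eq_image[OF picoh_zeta_in_H1coh_int[OF l]] homeomorphic_def by blast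
  then show ?thesis
    using homeomorphic_contractible_eq convex_imp_contractible[OF convex_coords_fiber] by blast
qed

lemma Zminus_eq_image_picoh_zeta:
  fixes h t :: "'a::finite \<Rightarrow> 'v::finite"
  shows "Zminus h t = (\<lambda>l. picoh h t (zeta l)) ` YU1 h t"
proof (intro equalityI subsetI)
  fix x assume "x \<in> Zminus h t"
  then have "{m \<in> YU1 h t. picoh h t (zeta m) = x} \<noteq> {}"
    unfolding Zminus_iff using YU1_fiber_eq_image by blast
  then show "x \<in> (\<lambda>l. picoh h t (zeta l)) ` YU1 h t"
    by blast
next
  fix x assume "x \<in> (\<lambda>l. picoh h t (zeta l)) ` YU1 h t"
  then obtain l where l: "l \<in> YU1 h t" and x: "x = picoh h t (zeta l)"
    by blast
  then have "l \<in> exp_vec ` coords_fiber h t x"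
    using YU1_fiber_eq_image[OF picoh_zeta_in_H1coh_int[OF l]] by blast
  then show "x \<in> Zminus h t"
    unfolding Zminus_iff x using picoh_zeta_in_H1coh_int[OF l] by blast
qed

theorem proposition3p6:
  fixes h t :: "'a::finite \<Rightarrow> 'v::finite"
  shows "(\<forall>l \<in> YU1 h t. picoh h t (zeta l) \<in> Zminus h t)
    \<and> (\<forall>x \<in> Zminus h t. \<exists>l \<in> YU1 h t. picoh h t (zeta l) = x)
    \<and> (\<forall>l \<in> YU1 h t. connected_component_set (YU1 h t) l
          = {m \<in> YU1 h t. picoh h t (zeta m) = picoh h t (zeta l)})
    \<and> (\<forall>l \<in> YU1 h t. contractible (connected_component_set (YU1 h t) l))"
proof (intro conjI ballI)
  fix l assume l: "l \<in> YU1 h t"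
  then show "picoh h t (zeta l) \<in> Zminus h t"
    by (simp add: Zminus_eq_image_picoh_zeta)
  show "connected_component_set (YU1 h t) l
    = {m \<in> YU1 h t. picoh h t (zeta m) = picoh h t (zeta l)}"
    using l by (rule connected_component_YU1_eq_fiber)
  show "contractible (connected_component_set (YU1 h t) l)"
    using l by (rule contractible_connected_component_YU1)
next
  fix x assume "x \<in> Zminus h t"
  then show "\<exists>l \<in> YU1 h t. picoh h t (zeta l) = x"
    by (auto simp: Zminus_eq_image_picoh_zeta)
qed

end
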